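(* Let $(M,d)$ be a complete separable geodesic space and $m\in\mathcal P_2(M)$ such that (A1) and (A2) hold. Let $\beta>0$ and suppose each loss $\ell_t$ ($t\ge1$) is measurable and geodesically $\beta$-expconcave, and that the \textsc{ewb} forecaster with $\beta_t=\beta$ is well defined (normalizing integrals finite and positive, each $m_t\in\mathcal P_2(M)$). Then for all $n\ge1$, with $L_n=\sum_{t=1}^n\ell_t$, \[\sum_{t=1}^n\ell_t(x_t)\le\inf_\mu\Big\{\int_ML_n\,\mathrm d\mu+\frac{\mathcal E(\mu|m)}{\beta}\Big\},\] where the infimum runs over probability measures $\mu$ on $M$ for which $\int L_n\,\mathrm d\mu$ is well defined.
   Context: Geodesic: path $\gamma:[0,1]\to M$ with $d(\gamma(s),\gamma(t))=|t-s|d(\gamma(0),\gamma(1))$. $f$ is geodesically convex if $t\mapsto f(\gamma(t))$ is convex for every geodesic; geodesically concave if $-f$ is; geodesically $\beta$-expconcave if $e^{-\beta f}$ is geodesically concave. $\mathcal P_2(M)$: Borel probability measures with $\int d^2(x,y)\mu(\mathrm dy)<\infty$ for all $x$; barycenter: minimizer of $x\mapsto\int d^2(x,y)\mu(\mathrm dy)$. (A1): every $\mu\in\mathcal P_2(M)$ has a barycenter. (A2): for every $\mu\in\mathcal P_2(M)$, barycenter $x^*$ of $\mu$ and geodesically convex $f:M\to\mathbb R$ either positive or in $L^1(\mu)$, $f(x^* )\le\int f\mathrm d\mu$. Relative entropy: $\mathcal E(\mu|m)=\int\ln(\mathrm d\mu/\mathrm dm)\,\mathrm d\mu$ if $\mu\ll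 m$, $+\infty$ otherwise. \textsc{ewb} forecaster with parameter $\beta$: $m_1=m$, $\mathrm dm_{t+1}=e^{-\beta\ell_t}\mathrm dm_t/\int e^{-\beta\ell_t}\mathrm dm_t$, $x_t$ any barycenter of $m_t$. *)

theory Defs
  imports "HOL-Probability.Probability"
begin

text \<open>Geodesics in a metric space (the whole type is the space M).\<close>
definition geodesic :: "(real \<Rightarrow> 'a::metric_space) \<Rightarrow> bool" where
  "geodesic \<gamma> \<longleftrightarrow> (\<forall>s\<in>{0..1}. \<forall>t\<in>{0..1}.
      dist (\<gamma> s) (\<gamma> t) = \<bar>t - s\<bar> * dist (\<gamma> 0) (\<gamma> 1))"

definition geodesic_space :: "'a::metric_space itself \<Rightarrow> bool" where
  "geodesic_space _ \<longleftrightarrow> (\<forall>x y::'a. \<exists>\<gamma>. geodesic \<gamma> \<and> \<gamma> 0 = x \<and> \<gamma> 1 = y)"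

definition geod_convex :: "('a::metric_space \<Rightarrow> real) \<Rightarrow> bool" where
  "geod_convex f \<longleftrightarrow> (\<forall>\<gamma>. geodesic \<gamma> \<longrightarrow> convex_on {0..1} (\<lambda>t. f (\<gamma> t)))"

definition geod_concave :: "('a::metric_space \<Rightarrow> real) \<Rightarrow> bool" where
  "geod_concave f \<longleftrightarrow> geod_convex (\<lambda>x. - f x)"

definition geod_expconcave :: "real \<Rightarrow> ('a::metric_space \<Rightarrow> real) \<Rightarrow> bool" where
  "geod_expconcave \<beta> f \<longleftrightarrow> geod_concave (\<lambda>x. exp (- \<beta> * f x))"

definition P2 :: "'a::metric_space measure \<Rightarrow> bool" where
  "P2 \<mu> \<longleftrightarrow> prob_space \<mu> \<and> sets \<mu> = sets borel \<and>
     (\<forall>x. integrable \<mu> (\<lambda>y. (dist x y)\<^sup>2))"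

definition barycenter :: "'a::metric_space measure \<Rightarrow> 'a \<Rightarrow> bool" where
  "barycenter \<mu> x \<longleftrightarrow>
     (\<forall>z. (\<integral>y. (dist x y)\<^sup>2 \<partial>\<mu>) \<le> (\<integral>y. (dist z y)\<^sup>2 \<partial>\<mu>))"

definition A1 :: "'a::metric_space itself \<Rightarrow> bool" where
  "A1 _ \<longleftrightarrow> (\<forall>\<mu>::'a measure. P2 \<mu> \<longrightarrow> (\<exists>x. barycenter \<mu> x))"

definition A2 :: "'a::metric_space itself \<Rightarrow> bool" where
  "A2 _ \<longleftrightarrow> (\<forall>(\<mu>::'a measure) x f. P2 \<mu> \<longrightarrow> barycenter \<mu> x \<longrightarrow> geod_convex f \<longrightarrow>
      (((\<forall>y. f y > 0) \<and> f \<in> borel_measurable borel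
           \<longrightarrow> ennreal (f x) \<le> (\<integral>\<^sup>+y. ennreal (f y) \<partial>\<mu>)) \<and>
       (integrable \<mu> f \<longrightarrow> f x \<le> (\<integral>y. f y \<partial>\<mu>))))"

definition ext_integral :: "'a measure \<Rightarrow> ('a \<Rightarrow> real) \<Rightarrow> ereal" where
  "ext_integral \<mu> f = enn2ereal (\<integral>\<^sup>+x. ennreal (f x) \<partial>\<mu>) - enn2ereal (\<integral>\<^sup>+x. ennreal (- f x) \<partial>\<mu>)"

definition integral_well_defined :: "'a measure \<Rightarrow> ('a \<Rightarrow> real) \<Rightarrow> bool" where
  "integral_well_defined \<mu> f \<longleftrightarrow> f \<in> borel_measurable \<mu> \<and>
     ((\<integral>\<^sup>+x. ennreal (f x) \<partial>\<mu>) < \<infinity> \<or> (\<integral>\<^sup>+x. ennreal (- f x) \<partial>\<mu>) < \<infinity>)"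

definition rel_entropy :: "'a measure \<Rightarrow> 'a measure \<Rightarrow> ereal" where
  "rel_entropy \<mu> m = (if absolutely_continuous m \<mu>
      then ext_integral \<mu> (\<lambda>x. ln (enn2real (RN_deriv m \<mu> x))) else \<infinity>)"

end

theory Submission imports Defs begin

text \<open>
  Let \<open>W\<^sub>t = \<integral> exp (-\<beta> loss\<^sub>t) dm\<^sub>t\<close> and \<open>Z = W\<^sub>1 \<cdots> W\<^sub>n\<close>. Applying (A2) at the barycenter
  \<open>x\<^sub>t\<close> to the geodesically convex function \<open>-exp (-\<beta> loss\<^sub>t)\<close> gives
  \<open>exp (-\<beta> loss\<^sub>t (x\<^sub>t)) \<ge> W\<^sub>t\<close>, so the cumulative loss is at most \<open>-ln Z / \<beta>\<close>.
  Unrolling the recursion, \<open>m\<^sub>n\<^sub>+\<^sub>1\<close> has \<open>m\<close>-density \<open>q = exp (-\<beta> L\<^sub>n) / Z\<close>, so \<open>\<integral> q dm = 1\<close>.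
  For \<open>\<mu> = g m\<close>, integrating \<open>ln (q/g) \<le> q/g - 1\<close> against \<open>\<mu>\<close> and using
  \<open>\<integral> q/g d\<mu> \<le> \<integral> q dm = 1\<close> yields the Gibbs variational inequality
  \<open>-ln Z \<le> \<beta> \<integral> L\<^sub>n d\<mu> + \<E>(\<mu>|m)\<close>.
\<close>

lemma ext_integral_eq_integral:
  assumes "integrable M f"
  shows "ext_integral M f = ereal (integral\<^sup>L M f)"
proof -
  obtain r q where "(\<integral>\<^sup>+x. ennreal (f x) \<partial>M) = ennreal r" "(\<integral>\<^sup>+x. ennreal (- f x) \<partial>M) = ennreal q"
    "0 \<le> r" "0 \<le> q" "integral\<^sup>L M f = r - q"
    using integrableE[OF assms] by metis
  then show ?thesis unfolding ext_integral_def by simp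
qed

lemma nn_integral_pos_part_less_top:
  assumes "ext_integral M f \<noteq> \<infinity>"
  shows "(\<integral>\<^sup>+x. ennreal (f x) \<partial>M) < \<infinity>"
proof (rule ccontr)
  assume "\<not> (\<integral>\<^sup>+x. ennreal (f x) \<partial>M) < \<infinity>"
  then have "ext_integral M f = \<infinity>"
    by (simp add: ext_integral_def less_top[symmetric] minus_ereal_def)
  with assms show False by simp
qed

lemma integrable_bounded_below:
  fixes f h :: "'a \<Rightarrow> real"
  assumes "f \<in> borel_measurable M" "(\<integral>\<^sup>+x. ennreal (f x) \<partial>M) < \<infinity>"
    and "integrable M h" "AE x in M. h x \<le> f x"
  shows "integrable M f"
proof -
  have "(\<integral>\<^sup>+x. ennreal (- f x) \<partial>M) \<le> (\<integral>\<^sup>+x. ennreal (- h x) \<partial>M)"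
    using assms(4) by (intro nn_integral_mono_AE) (auto elim!: eventually_mono intro: ennreal_leI)
  also have "\<dots> < \<infinity>"
    using assms(3) by (auto simp: less_top[symmetric])
  finally show ?thesis
    using assms(1,2) unfolding real_integrable_def by auto
qed

lemma integrable_max_0:
  fixes f :: "'a \<Rightarrow> real"
  assumes "f \<in> borel_measurable M" "(\<integral>\<^sup>+x. ennreal (f x) \<partial>M) < \<infinity>"
  shows "integrable M (\<lambda>x. max (f x) 0)"
proof (rule integrable_bounded_below[where h="\<lambda>_. 0"])
  have "(\<lambda>x. ennreal (max (f x) 0)) = (\<lambda>x. ennreal (f x))"
    by (auto simp: max_def fun_eq_iff ennreal_neg)
  then show "(\<integral>\<^sup>+x. ennreal (max (f x) 0) \<partial>M) < \<infinity>"
    using assms(2) by simp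
qed (use assms(1) in auto)

lemma integrable_if_sum_bounded_below:
  fixes a f g :: "'a \<Rightarrow> real"
  assumes "c > 0" and a: "integrable M a" and le: "AE x in M. a x \<le> f x + c * g x"
    and f: "f \<in> borel_measurable M" "(\<integral>\<^sup>+x. ennreal (f x) \<partial>M) < \<infinity>"
    and g: "g \<in> borel_measurable M" "(\<integral>\<^sup>+x. ennreal (g x) \<partial>M) < \<infinity>"
  shows "integrable M f" "integrable M g"
proof -
  have pos_f: "integrable M (\<lambda>x. max (f x) 0)" and pos_g: "integrable M (\<lambda>x. max (g x) 0)"
    using integrable_max_0 f g by blast+
  show "integrable M f"
  proof (rule integrable_bounded_below[OF f])
    show "integrable M (\<lambda>x. a x - c * max (g x) 0)"
      using a pos_g by auto
    show "AE x in M. a x - c * max (g x) 0 \<le> f x"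
      using le
    proof eventually_elim
      fix x
      assume "a x \<le> f x + c * g x"
      moreover have "c * g x \<le> c * max (g x) 0"
        using \<open>c > 0\<close> by (simp add: mult_left_mono)
      ultimately show "a x - c * max (g x) 0 \<le> f x"
        by linarith
    qed
  qed
  show "integrable M g"
  proof (rule integrable_bounded_below[OF g])
    show "integrable M (\<lambda>x. (a x - max (f x) 0) / c)"
      using a pos_f by auto
    show "AE x in M. (a x - max (f x) 0) / c \<le> g x"
      using le by eventually_elim (use \<open>c > 0\<close> in \<open>auto simp: pos_divide_le_eq mult.commute\<close>)
  qed
qed

lemma ext_integral_sum_bounded_below:
  fixes a f g :: "'a \<Rightarrow> real"
  assumes "prob_space M" "c > 0" "integrable M a" and le: "AE x in M. a x \<le> f x + c * g x"
    and "f \<in> borel_measurable M" "g \<in> borel_measurable M"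
  shows "ereal (integral\<^sup>L M a / c) \<le> ext_integral M g + ext_integral M f / ereal c"
proof (cases "ext_integral M f = \<infinity> \<or> ext_integral M g = \<infinity>")
  case True
  then show ?thesis
    using \<open>c > 0\<close> by auto
next
  case False
  then have f: "integrable M f" and g: "integrable M g"
    using integrable_if_sum_bounded_below[OF \<open>c > 0\<close> \<open>integrable M a\<close> le]
      nn_integral_pos_part_less_top assms(5,6) by blast+
  have "integral\<^sup>L M a \<le> integral\<^sup>L M f + c * integral\<^sup>L M g"
    using integral_mono_AE[OF _ _ le] \<open>integrable M a\<close> f g by simp
  then have "integral\<^sup>L M a / c \<le> integral\<^sup>L M g + integral\<^sup>L M f / c"
    using \<open>c > 0\<close> by (simp add: field_simps)
  then show ?thesis
    using \<open>c > 0\<close> by (simp add: ext_integral_eq_integral f g)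
qed

lemma nn_integral_eq_1_if_prob_space_density:
  assumes "prob_space (density M f)" "f \<in> borel_measurable M"
  shows "(\<integral>\<^sup>+x. f x \<partial>M) = 1"
proof -
  have "1 = emeasure (density M f) (space M)"
    using prob_space.emeasure_space_1[OF assms(1)] by simp
  also have "\<dots> = (\<integral>\<^sup>+x. f x * indicator (space M) x \<partial>M)"
    using assms(2) by (simp add: emeasure_density)
  also have "\<dots> = (\<integral>\<^sup>+x. f x \<partial>M)"
    by (rule nn_integral_cong) simp
  finally show ?thesis by simp
qed

lemma barycenter_expconcave_loss_bound:
  assumes "A2 TYPE('a::metric_space)" "P2 \<mu>" "barycenter \<mu> x" "\<beta> > 0"
    and "geod_expconcave \<beta> (l :: 'a \<Rightarrow> real)"
    and "integrable \<mu> (\<lambda>y. exp (- \<beta> * l y))" "(\<integral>y. exp (- \<beta> * l y) \<partial>\<mu>) > 0"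
  shows "l x \<le> - ln (\<integral>y. exp (- \<beta> * l y) \<partial>\<mu>) / \<beta>"
proof -
  have "geod_convex (\<lambda>y. - exp (- \<beta> * l y))"
    using assms(5) by (simp add: geod_expconcave_def geod_concave_def)
  then have "- exp (- \<beta> * l x) \<le> (\<integral>y. - exp (- \<beta> * l y) \<partial>\<mu>)"
    using assms(1-3) integrable_minus[OF assms(6)] unfolding A2_def by blast
  then have "(\<integral>y. exp (- \<beta> * l y) \<partial>\<mu>) \<le> exp (- \<beta> * l x)"
    by simp
  then have "ln (\<integral>y. exp (- \<beta> * l y) \<partial>\<mu>) \<le> - \<beta> * l x"
    using assms(7) by (metis ln_exp ln_le_cancel_iff exp_gt_zero)
  then show ?thesis
    using assms(4) by (simp add: field_simps)
qed

lemma sum_le_neg_ln_prod: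
  fixes f W :: "'b \<Rightarrow> real"
  assumes "finite A" "\<And>t. t \<in> A \<Longrightarrow> W t \<noteq> 0" "\<And>t. t \<in> A \<Longrightarrow> f t \<le> - ln (W t) / \<beta>"
  shows "(\<Sum>t\<in>A. f t) \<le> - ln (\<Prod>t\<in>A. W t) / \<beta>"
proof -
  have "(\<Sum>t\<in>A. f t) \<le> (\<Sum>t\<in>A. - ln (W t) / \<beta>)"
    using assms(3) by (rule sum_mono)
  also have "\<dots> = - ln (\<Prod>t\<in>A. W t) / \<beta>"
    using assms(1,2) by (simp add: ln_prod sum_divide_distrib sum_negf)
  finally show ?thesis .
qed

lemma exp_weights_density:
  assumes "\<And>t. t \<ge> 1 \<Longrightarrow> l t \<in> borel_measurable m"
    and "\<And>t. t \<ge> 1 \<Longrightarrow> W t > 0" and "mt 1 = m"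
    and "\<And>t. t \<ge> 1 \<Longrightarrow> mt (Suc t) = density (mt t) (\<lambda>y. ennreal (exp (- \<beta> * l t y) / W t))"
  shows "mt (Suc n) = density m (\<lambda>y. ennreal (exp (- \<beta> * (\<Sum>t = 1..n. l t y)) / (\<Prod>t = 1..n. W t)))"
proof (induction n)
  case 0
  then show ?case using assms(3) by (simp add: density_1)
next
  case (Suc n)
  have "ennreal (exp (- \<beta> * (\<Sum>t = 1..n. l t y)) / (\<Prod>t = 1..n. W t))
          * ennreal (exp (- \<beta> * l (Suc n) y) / W (Suc n))
      = ennreal (exp (- \<beta> * (\<Sum>t = 1..Suc n. l t y)) / (\<Prod>t = 1..Suc n. W t))" for y
  proof -
    have split: "exp (- \<beta> * (\<Sum>t = 1..Suc n. l t y)) / (\<Prod>t = 1..Suc n. W t)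
        = exp (- \<beta> * (\<Sum>t = 1..n. l t y)) / (\<Prod>t = 1..n. W t) * (exp (- \<beta> * l (Suc n) y) / W (Suc n))"
      by (simp add: distrib_left exp_add[symmetric] algebra_simps)
    have "0 \<le> exp (- \<beta> * l (Suc n) y) / W (Suc n)"
      using assms(2)[of "Suc n"] by simp
    then show ?thesis
      unfolding split by (rule ennreal_mult''[symmetric])
  qed
  then show ?case
    using Suc.IH assms(4)[of "Suc n"] assms(1)
    by (simp add: density_density_eq borel_measurable_sum)
qed

lemma integrable_density_ratio:
  fixes q :: "'a \<Rightarrow> real"
  assumes g: "g \<in> borel_measurable m"
    and q: "q \<in> borel_measurable m" "\<And>y. q y \<ge> 0" "(\<integral>\<^sup>+y. ennreal (q y) \<partial>m) = 1"
  shows "integrable (density m g) (\<lambda>y. q y / enn2real (g y))"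
    and "(\<integral>y. q y / enn2real (g y) \<partial>density m g) \<le> 1"
proof -
  let ?r = "\<lambda>y. q y / enn2real (g y)"
  have r_nonneg: "?r y \<ge> 0" for y
    using q(2)[of y] by simp
  have ptw: "g y * ennreal (?r y) \<le> ennreal (q y)" for y
  proof (cases "g y" rule: ennreal_cases)
    case (real a)
    show ?thesis
    proof (cases "a = 0")
      case False
      have "ennreal a * ennreal (q y / a) = ennreal (a * (q y / a))"
        using real q(2)[of y] by (intro ennreal_mult[symmetric]) simp_all
      then show ?thesis
        using real False by simp
    qed (use real in simp)
  qed simp
  have "(\<integral>\<^sup>+y. g y * ennreal (?r y) \<partial>m) \<le> (\<integral>\<^sup>+y. ennreal (q y) \<partial>m)"
    by (rule nn_integral_mono) (rule ptw)
  then have ratio: "(\<integral>\<^sup>+y. ennreal (?r y) \<partial>density m g) \<le> 1"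
    using g q(1,3) by (simp add: nn_integral_density)
  then show int: "integrable (density m g) ?r"
    using g q(1) r_nonneg
    by (intro integrableI_nonneg) (auto intro: order.strict_trans1[OF _ ennreal_one_less_top])
  show "(\<integral>y. ?r y \<partial>density m g) \<le> 1"
    using ratio nn_integral_eq_integral[OF int] r_nonneg by simp
qed

lemma AE_RN_deriv_pos_finite:
  assumes "sigma_finite_measure m" "sigma_finite_measure \<mu>"
    and "absolutely_continuous m \<mu>" "sets \<mu> = sets m"
  shows "AE y in \<mu>. 0 < RN_deriv m \<mu> y \<and> RN_deriv m \<mu> y < \<infinity>"
proof -
  have "AE y in m. RN_deriv m \<mu> y \<noteq> \<infinity>"
    using assms by (intro sigma_finite_measure.RN_deriv_finite)
  then have "AE y in density m (RN_deriv m \<mu>). 0 < RN_deriv m \<mu> y \<and> RN_deriv m \<mu> y < \<infinity>"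
    by (auto simp: AE_density less_top elim!: eventually_mono)
  then show ?thesis
    unfolding sigma_finite_measure.density_RN_deriv[OF assms(1,3,4)] .
qed

lemma gibbs_variational_inequality:
  fixes L :: "'a \<Rightarrow> real"
  assumes m: "prob_space m" and \<mu>: "prob_space \<mu>" "sets \<mu> = sets m"
    and L: "L \<in> borel_measurable m" and "\<beta> > 0" "Z > 0"
    and norm: "(\<integral>\<^sup>+y. ennreal (exp (- \<beta> * L y) / Z) \<partial>m) = 1"
  shows "ereal (- ln Z / \<beta>) \<le> ext_integral \<mu> L + rel_entropy \<mu> m / ereal \<beta>"
proof (cases "absolutely_continuous m \<mu>")
  case False
  then show ?thesis
    using \<open>\<beta> > 0\<close> by (simp add: rel_entropy_def)
next
  case True
  interpret \<mu>: prob_space \<mu>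
    by (rule \<mu>(1))
  define g where "g = RN_deriv m \<mu>"
  define \<phi> where "\<phi> y = ln (enn2real (g y))" for y
  define r where "r y = exp (- \<beta> * L y) / Z / enn2real (g y)" for y
  have g: "g \<in> borel_measurable m"
    by (simp add: g_def)
  have \<mu>_eq: "density m g = \<mu>"
    unfolding g_def using \<mu>(2) True
    by (intro sigma_finite_measure.density_RN_deriv prob_space_imp_sigma_finite m) simp_all
  have "\<phi> \<in> borel_measurable m"
    unfolding \<phi>_def using g by measurable
  then have meas: "\<phi> \<in> borel_measurable \<mu>" "L \<in> borel_measurable \<mu>"
    using L unfolding measurable_cong_sets[OF \<mu>(2) refl] by auto
  have q_meas: "(\<lambda>y. exp (- \<beta> * L y) / Z) \<in> borel_measurable m"
    using L by measurable
  have q_nonneg: "0 \<le> exp (- \<beta> * L y) / Z" for y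
    using \<open>Z > 0\<close> by simp
  have r: "integrable \<mu> r" "integral\<^sup>L \<mu> r \<le> 1"
    using integrable_density_ratio[OF g q_meas q_nonneg norm] unfolding \<mu>_eq r_def by auto
  have "AE y in \<mu>. 1 - r y - ln Z \<le> \<phi> y + \<beta> * L y"
    using AE_RN_deriv_pos_finite[OF prob_space_imp_sigma_finite[OF m]
        prob_space_imp_sigma_finite[OF \<mu>(1)] True \<mu>(2)]
  proof eventually_elim
    fix y
    assume "0 < RN_deriv m \<mu> y \<and> RN_deriv m \<mu> y < \<infinity>"
    then have g_pos: "enn2real (g y) > 0"
      by (simp add: g_def enn2real_positive_iff)
    have "ln (r y) \<le> r y - 1"
      using g_pos \<open>Z > 0\<close> by (intro ln_le_minus_one) (simp add: r_def)
    moreover have "ln (r y) = - \<beta> * L y - ln Z - \<phi> y"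
      using g_pos \<open>Z > 0\<close> by (simp add: r_def \<phi>_def ln_div ln_mult)
    ultimately show "1 - r y - ln Z \<le> \<phi> y + \<beta> * L y"
      by linarith
  qed
  then have "ereal (integral\<^sup>L \<mu> (\<lambda>y. 1 - r y - ln Z) / \<beta>)
      \<le> ext_integral \<mu> L + ext_integral \<mu> \<phi> / ereal \<beta>"
    using \<mu>(1) r(1) meas \<open>\<beta> > 0\<close> by (intro ext_integral_sum_bounded_below) auto
  moreover have "- ln Z / \<beta> \<le> integral\<^sup>L \<mu> (\<lambda>y. 1 - r y - ln Z) / \<beta>"
  proof -
    have "- ln Z \<le> integral\<^sup>L \<mu> (\<lambda>y. 1 - r y - ln Z)"
      using r by (simp add: \<mu>.prob_space)
    then show ?thesis
      using \<open>\<beta> > 0\<close> by (simp add: field_simps)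
  qed
  moreover have "rel_entropy \<mu> m = ext_integral \<mu> \<phi>"
    using True by (simp add: rel_entropy_def \<phi>_def[abs_def] g_def)
  ultimately show ?thesis
    by (metis ereal_less_eq(3) order_trans)
qed

theorem mainTheorem11:
  fixes m :: "'a::polish_space measure"
    and \<beta> :: real
    and loss :: "nat \<Rightarrow> 'a \<Rightarrow> real"
    and mt :: "nat \<Rightarrow> 'a measure"
    and x :: "nat \<Rightarrow> 'a"
  assumes geod: "geodesic_space TYPE('a)"
    and m_P2: "P2 m"
    and A1: "A1 TYPE('a)"
    and A2: "A2 TYPE('a)"
    and beta_pos: "\<beta> > 0"
    and loss_meas: "\<And>t. t \<ge> 1 \<Longrightarrow> loss t \<in> borel_measurable borel"
    and loss_expconc: "\<And>t. t \<ge> 1 \<Longrightarrow> geod_expconcave \<beta> (loss t)"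
    and ewb_init: "mt 1 = m"
    and ewb_norm_int: "\<And>t. t \<ge> 1 \<Longrightarrow> integrable (mt t) (\<lambda>y. exp (- \<beta> * loss t y))"
    and ewb_norm_pos: "\<And>t. t \<ge> 1 \<Longrightarrow> (\<integral>y. exp (- \<beta> * loss t y) \<partial>mt t) > 0"
    and ewb_step: "\<And>t. t \<ge> 1 \<Longrightarrow> mt (Suc t) = density (mt t)
                     (\<lambda>y. ennreal (exp (- \<beta> * loss t y) / (\<integral>z. exp (- \<beta> * loss t z) \<partial>mt t)))"
    and ewb_P2: "\<And>t. t \<ge> 1 \<Longrightarrow> P2 (mt t)"
    and ewb_bary: "\<And>t. t \<ge> 1 \<Longrightarrow> barycenter (mt t) (x t)"
    and n_pos: "n \<ge> 1"
  shows "ereal (\<Sum>t = 1..n. loss t (x t)) \<le>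
     (INF \<mu> \<in> {\<mu>. prob_space \<mu> \<and> sets \<mu> = sets borel \<and>
                   integral_well_defined \<mu> (\<lambda>y. \<Sum>t = 1..n. loss t y)}.
        ext_integral \<mu> (\<lambda>y. \<Sum>t = 1..n. loss t y) + rel_entropy \<mu> m / ereal \<beta>)"
proof -
  define W where "W t = (\<integral>y. exp (- \<beta> * loss t y) \<partial>mt t)" for t
  define Z where "Z = (\<Prod>t = 1..n. W t)"
  define L where "L y = (\<Sum>t = 1..n. loss t y)" for y
  have W_pos: "W t > 0" if "t \<ge> 1" for t
    using ewb_norm_pos[OF that] by (simp add: W_def)
  have m: "prob_space m" "sets m = sets borel"
    using m_P2 by (auto simp: P2_def)
  have loss_m: "loss t \<in> borel_measurable m" if "t \<ge> 1" for t
    using loss_meas[OF that] unfolding measurable_cong_sets[OF m(2) refl] .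
  then have L: "L \<in> borel_measurable m"
    unfolding L_def by auto
  have step: "mt (Suc t) = density (mt t) (\<lambda>y. ennreal (exp (- \<beta> * loss t y) / W t))"
    if "t \<ge> 1" for t
    using ewb_step[OF that] by (simp add: W_def)
  have "mt (Suc n) = density m (\<lambda>y. ennreal (exp (- \<beta> * L y) / Z))"
    unfolding L_def Z_def by (rule exp_weights_density[OF loss_m W_pos ewb_init step])
  then have norm: "(\<integral>\<^sup>+y. ennreal (exp (- \<beta> * L y) / Z) \<partial>m) = 1"
    using ewb_P2[of "Suc n"] L
    by (intro nn_integral_eq_1_if_prob_space_density) (auto simp: P2_def)
  have "(\<Sum>t = 1..n. loss t (x t)) \<le> - ln Z / \<beta>"
    unfolding Z_def using W_pos barycenter_expconcave_loss_bound[OF A2 ewb_P2 ewb_bary beta_pos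
        loss_expconc ewb_norm_int ewb_norm_pos]
    by (intro sum_le_neg_ln_prod) (force simp: W_def)+
  then have online: "ereal (\<Sum>t = 1..n. loss t (x t)) \<le> ereal (- ln Z / \<beta>)"
    by simp
  have Z_pos: "Z > 0"
    unfolding Z_def using W_pos by (intro prod_pos) auto
  show ?thesis
    unfolding L_def[symmetric]
  proof (rule INF_greatest)
    fix \<mu>
    assume "\<mu> \<in> {\<mu>. prob_space \<mu> \<and> sets \<mu> = sets borel \<and> integral_well_defined \<mu> L}"
    then show "ereal (\<Sum>t = 1..n. loss t (x t)) \<le> ext_integral \<mu> L + rel_entropy \<mu> m / ereal \<beta>"
      using order_trans[OF online gibbs_variational_inequality[OF m(1) _ _ L beta_pos Z_pos norm]] m(2)
      by auto
  qed
qed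

end
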